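(* For each natural number $n\ge2$, $[S_n\ltimes\mathbb{T}^n,S_n\ltimes\mathbb{T}^n]=[S_n,S_n]\ltimes\mathbb{T}^n_1$, where $\mathbb{T}^n_1=\{t_{(\lambda_1,\dots,\lambda_n)}\in\mathbb{T}^n\mid\prod_{i=1}^n\lambda_i=1\}$.
   Context: $K$ is a field of characteristic zero. $\mathbb{T}^n=\{t_\lambda\mid\lambda=(\lambda_1,\dots,\lambda_n)\in(K^* )^n\}$ is the torus of automorphisms $t_\lambda:x_i\mapsto\lambda_ix_i,\ y_i\mapsto\lambda_i^{-1}y_i$ of the algebra $\mathbb{S}_n$ (generated by $x_i,y_i$ with $y_ix_i=1$ and $x_i,y_i$ commuting with $x_j,y_j$ for $i\ne j$), and $S_n$ is the symmetric group acting by automorphisms $x_i\mapsto x_{\sigma(i)},y_i\mapsto y_{\sigma(i)}$; in the group $S_n\ltimes\mathbb{T}^n$ they generate, $S_n$ acts on $\mathbb{T}^n$ by permuting the coordinates of $\lambda$. *)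

theory Defs
  imports "HOL-Algebra.Sym_Groups" "HOL-Algebra.Solvable_Groups"
begin

text \<open>Torus T^n: tuples lambda = (lambda_1,...,lambda_n) in (K^*)^n, represented as functions
  nat => K, nonzero on {1..n} and normalised to 1 outside {1..n}.\<close>
definition torus :: "nat \<Rightarrow> (nat \<Rightarrow> 'k::field) set" where
  "torus n = {l. (\<forall>i\<in>{1..n}. l i \<noteq> 0) \<and> (\<forall>i. i \<notin> {1..n} \<longrightarrow> l i = 1)}"

definition torus1 :: "nat \<Rightarrow> (nat \<Rightarrow> 'k::field) set" where
  "torus1 n = {l \<in> torus n. (\<Prod>i\<in>{1..n}. l i) = 1}"

text \<open>The pair (sigma, lambda) stands for the automorphism sigma \<circ> t_lambda
  of the algebra; since sigma t_lambda sigma^-1 = t_(lambda \<circ> sigma^-1) one gets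
  (sigma t_lambda)(tau t_mu) = (sigma tau) t_(lambda\<circ>tau * mu).\<close>
definition SnT :: "nat \<Rightarrow> ((nat \<Rightarrow> nat) \<times> (nat \<Rightarrow> 'k::field)) monoid" where
  "SnT n = \<lparr> carrier = {(s, l). s permutes {1..n} \<and> l \<in> torus n},
            mult = (\<lambda>(s, l) (t, m). (s \<circ> t, \<lambda>i. l (t i) * m i)),
            one = (id, \<lambda>_. 1) \<rparr>"

end

theory Submission
  imports Defs
begin

text \<open>
  Both projections of \<open>S\<^sub>n \<ltimes> T\<^sup>n\<close>, onto \<open>S\<^sub>n\<close> and via \<open>(\<sigma>, \<lambda>) \<mapsto> \<Prod>\<^sub>i \<lambda>\<^sub>i\<close> onto the
  abelian group \<open>K\<^sup>*\<close>, are homomorphisms, so the commutator subgroup lies in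
  \<open>[S\<^sub>n, S\<^sub>n] \<ltimes> T\<^sup>n\<^sub>1\<close>. Conversely \<open>[S\<^sub>n, S\<^sub>n]\<close> embeds, and the commutator of the
  torus element \<open>a\<^sup>-\<^sup>1\<close> at coordinate \<open>i\<close> with the transposition \<open>(i j)\<close> moves a factor
  \<open>a\<close> from coordinate \<open>i\<close> to coordinate \<open>j\<close>; products of such moves give all of
  \<open>T\<^sup>n\<^sub>1\<close>.
\<close>

lemma torus_nonzero: "l \<in> torus n \<Longrightarrow> l i \<noteq> 0"
  unfolding torus_def by (cases "i \<in> {1..n}") auto

lemma torus_twisted_mult_closed:
  assumes "t permutes {1..n}" "l \<in> torus n" "m \<in> torus n"
  shows "(\<lambda>i. l (t i) * m i) \<in> torus n"
  using assms unfolding torus_def by (auto simp: permutes_not_in permutes_in_image)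

lemma SnT_carrier_iff: "x \<in> carrier (SnT n) \<longleftrightarrow> fst x permutes {1..n} \<and> snd x \<in> torus n"
  unfolding SnT_def by (cases x) auto

lemma SnT_mult [simp]: "(s, l) \<otimes>\<^bsub>SnT n\<^esub> (t, m) = (s \<circ> t, \<lambda>i. l (t i) * m i)"
  unfolding SnT_def by simp

lemma SnT_one [simp]: "\<one>\<^bsub>SnT n\<^esub> = (id, \<lambda>_. 1)"
  unfolding SnT_def by simp

lemma SnT_inverse_mem:
  assumes "(s, l) \<in> carrier (SnT n)"
  shows "(inv' s, \<lambda>j. inverse (l (inv' s j))) \<in> carrier (SnT n)"
    and "(inv' s, \<lambda>j. inverse (l (inv' s j))) \<otimes>\<^bsub>SnT n\<^esub> (s, l) = \<one>\<^bsub>SnT n\<^esub>"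
proof -
  from assms have s: "s permutes {1..n}" and l: "l \<in> torus n" by (auto simp: SnT_carrier_iff)
  show "(inv' s, \<lambda>j. inverse (l (inv' s j))) \<in> carrier (SnT n)"
    using s l unfolding SnT_carrier_iff torus_def
    by (auto simp: permutes_inv permutes_not_in[OF permutes_inv[OF s]]
        permutes_in_image[OF permutes_inv[OF s]])
  show "(inv' s, \<lambda>j. inverse (l (inv' s j))) \<otimes>\<^bsub>SnT n\<^esub> (s, l) = \<one>\<^bsub>SnT n\<^esub>"
    using s l by (auto simp: permutes_inv_o permutes_inverses torus_nonzero)
qed

lemma group_SnT: "group (SnT n :: ((nat \<Rightarrow> nat) \<times> (nat \<Rightarrow> 'k::field)) monoid)"
proof (rule groupI)
  fix x y :: "(nat \<Rightarrow> nat) \<times> (nat \<Rightarrow> 'k)"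
  assume "x \<in> carrier (SnT n)" "y \<in> carrier (SnT n)"
  then show "x \<otimes>\<^bsub>SnT n\<^esub> y \<in> carrier (SnT n)"
    by (cases x, cases y) (auto simp: SnT_carrier_iff permutes_compose torus_twisted_mult_closed)
next
  fix x y z :: "(nat \<Rightarrow> nat) \<times> (nat \<Rightarrow> 'k)"
  show "x \<otimes>\<^bsub>SnT n\<^esub> y \<otimes>\<^bsub>SnT n\<^esub> z = x \<otimes>\<^bsub>SnT n\<^esub> (y \<otimes>\<^bsub>SnT n\<^esub> z)"
    by (cases x, cases y, cases z) (simp add: o_assoc mult.assoc)
next
  fix x :: "(nat \<Rightarrow> nat) \<times> (nat \<Rightarrow> 'k)"
  assume "x \<in> carrier (SnT n)"
  then show "\<exists>y\<in>carrier (SnT n). y \<otimes>\<^bsub>SnT n\<^esub> x = \<one>\<^bsub>SnT n\<^esub>"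
    using SnT_inverse_mem by (cases x) blast
qed (auto simp: SnT_carrier_iff torus_def)

lemma SnT_inv:
  assumes "(s, l) \<in> carrier (SnT n :: ((nat \<Rightarrow> nat) \<times> (nat \<Rightarrow> 'k::field)) monoid)"
  shows "inv\<^bsub>SnT n\<^esub> (s, l) = (inv' s, \<lambda>j. inverse (l (inv' s j)))"
  using group.inv_equality[OF group_SnT SnT_inverse_mem(2)[OF assms] assms SnT_inverse_mem(1)[OF assms]] .

lemma subgroup_derived_SnT:
  "subgroup (derived (SnT n) (carrier (SnT n))) (SnT n :: ((nat \<Rightarrow> nat) \<times> (nat \<Rightarrow> 'k::field)) monoid)"
  by (rule group.derived_is_subgroup[OF group_SnT subset_refl])

lemma group_hom_SnT_fst:
  "group_hom (SnT n :: ((nat \<Rightarrow> nat) \<times> (nat \<Rightarrow> 'k::field)) monoid) (sym_group n) fst"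
  by (intro group_hom.intro group_hom_axioms.intro group_SnT sym_group_is_group homI)
    (auto simp: SnT_carrier_iff sym_group_carrier sym_group_mult)

lemma group_hom_sym_group_SnT:
  "group_hom (sym_group n) (SnT n :: ((nat \<Rightarrow> nat) \<times> (nat \<Rightarrow> 'k::field)) monoid) (\<lambda>s. (s, \<lambda>_. 1))"
  by (intro group_hom.intro group_hom_axioms.intro group_SnT sym_group_is_group homI)
    (auto simp: SnT_carrier_iff sym_group_carrier sym_group_mult torus_def)

definition nonzero_mult_group :: "'k::field monoid" where
  "nonzero_mult_group = \<lparr>carrier = {x. x \<noteq> 0}, mult = (*), one = 1\<rparr>"

lemma comm_group_nonzero_mult_group: "comm_group (nonzero_mult_group :: 'k::field monoid)"
proof (rule comm_groupI)
  fix x :: 'k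
  assume "x \<in> carrier nonzero_mult_group"
  then show "\<exists>y\<in>carrier nonzero_mult_group. y \<otimes>\<^bsub>nonzero_mult_group\<^esub> x = \<one>\<^bsub>nonzero_mult_group\<^esub>"
    by (intro bexI[of _ "inverse x"]) (simp_all add: nonzero_mult_group_def)
qed (auto simp: nonzero_mult_group_def mult.assoc mult.commute)

lemma group_hom_SnT_torus_prod:
  "group_hom (SnT n :: ((nat \<Rightarrow> nat) \<times> (nat \<Rightarrow> 'k::field)) monoid) nonzero_mult_group
     (\<lambda>x. \<Prod>i\<in>{1..n}. snd x i)"
proof (intro group_hom.intro group_hom_axioms.intro group_SnT
    comm_group.axioms(2)[OF comm_group_nonzero_mult_group] homI)
  fix x :: "(nat \<Rightarrow> nat) \<times> (nat \<Rightarrow> 'k)"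
  assume "x \<in> carrier (SnT n)"
  then show "(\<Prod>i\<in>{1..n}. snd x i) \<in> carrier nonzero_mult_group"
    by (auto simp: SnT_carrier_iff nonzero_mult_group_def torus_nonzero)
next
  fix x y :: "(nat \<Rightarrow> nat) \<times> (nat \<Rightarrow> 'k)"
  assume "y \<in> carrier (SnT n)"
  then have t: "fst y permutes {1..n}" by (simp add: SnT_carrier_iff)
  obtain s l t m where xy: "x = (s, l)" "y = (t, m)" by (cases x, cases y)
  have "(\<Prod>i\<in>{1..n}. l (t i) * m i) = (\<Prod>i\<in>{1..n}. l (t i)) * (\<Prod>i\<in>{1..n}. m i)"
    by (rule prod.distrib)
  also have "(\<Prod>i\<in>{1..n}. l (t i)) = (\<Prod>i\<in>{1..n}. l i)"
    using prod.permute[of t "{1..n}" l] t xy by (simp add: o_def)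
  finally show "(\<Prod>i\<in>{1..n}. snd (x \<otimes>\<^bsub>SnT n\<^esub> y) i)
      = (\<Prod>i\<in>{1..n}. snd x i) \<otimes>\<^bsub>nonzero_mult_group\<^esub> (\<Prod>i\<in>{1..n}. snd y i)"
    by (simp add: xy nonzero_mult_group_def)
qed

lemma fst_image_derived_SnT:
  "fst ` derived (SnT n :: ((nat \<Rightarrow> nat) \<times> (nat \<Rightarrow> 'k::field)) monoid) (carrier (SnT n))
     = derived (sym_group n) (carrier (sym_group n))"
proof -
  interpret F: group_hom "SnT n :: ((nat \<Rightarrow> nat) \<times> (nat \<Rightarrow> 'k)) monoid" "sym_group n" fst
    by (rule group_hom_SnT_fst)
  have "fst ` carrier (SnT n :: ((nat \<Rightarrow> nat) \<times> (nat \<Rightarrow> 'k)) monoid) = carrier (sym_group n)"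
  proof (intro equalityI subsetI)
    fix s assume "s \<in> carrier (sym_group n)"
    then have "(s, \<lambda>_. 1::'k) \<in> carrier (SnT n)"
      by (simp add: SnT_carrier_iff sym_group_carrier torus_def)
    then show "s \<in> fst ` carrier (SnT n :: ((nat \<Rightarrow> nat) \<times> (nat \<Rightarrow> 'k)) monoid)"
      by force
  qed (auto simp: SnT_carrier_iff sym_group_carrier)
  then show ?thesis
    using F.derived_img[of "carrier (SnT n)"] by simp
qed

lemma torus_prod_derived_SnT:
  assumes "x \<in> derived (SnT n :: ((nat \<Rightarrow> nat) \<times> (nat \<Rightarrow> 'k::field)) monoid) (carrier (SnT n))"
  shows "(\<Prod>i\<in>{1..n}. snd x i) = 1"
proof -
  let ?G = "SnT n :: ((nat \<Rightarrow> nat) \<times> (nat \<Rightarrow> 'k)) monoid"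
  let ?prod = "\<lambda>x::(nat \<Rightarrow> nat) \<times> (nat \<Rightarrow> 'k). \<Prod>i\<in>{1..n}. snd x i"
  interpret P: group_hom ?G nonzero_mult_group ?prod
    by (rule group_hom_SnT_torus_prod)
  have "?prod ` derived ?G (carrier ?G) = derived nonzero_mult_group (?prod ` carrier ?G)"
    using P.derived_img[of "carrier ?G"] by simp
  also have "\<dots> = {\<one>\<^bsub>nonzero_mult_group\<^esub>}"
    by (rule comm_group.derived_eq_singleton[OF comm_group_nonzero_mult_group])
      (use P.hom_closed in auto)
  finally show ?thesis
    using assms by (auto simp: nonzero_mult_group_def)
qed

lemma embedded_derived_sym_group_in_derived_SnT:
  assumes "s \<in> derived (sym_group n) (carrier (sym_group n))"
  shows "(s, \<lambda>_. 1) \<in> derived (SnT n :: ((nat \<Rightarrow> nat) \<times> (nat \<Rightarrow> 'k::field)) monoid) (carrier (SnT n))"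
proof -
  let ?G = "SnT n :: ((nat \<Rightarrow> nat) \<times> (nat \<Rightarrow> 'k)) monoid"
  let ?emb = "\<lambda>s. (s, \<lambda>_. 1::'k)"
  interpret I: group_hom "sym_group n" ?G ?emb
    by (rule group_hom_sym_group_SnT)
  have "?emb s \<in> ?emb ` derived (sym_group n) (carrier (sym_group n))"
    using assms by blast
  also have "\<dots> = derived ?G (?emb ` carrier (sym_group n))"
    using I.derived_img[of "carrier (sym_group n)"] by simp
  also have "\<dots> \<subseteq> derived ?G (carrier ?G)"
    by (rule I.H.mono_derived) (use I.hom_closed in auto)
  finally show ?thesis .
qed

definition torus_transfer :: "nat \<Rightarrow> nat \<Rightarrow> 'k::field \<Rightarrow> nat \<Rightarrow> 'k" where
  "torus_transfer i j a = (\<lambda>m. if m = i then inverse a else if m = j then a else 1)"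

lemma torus_transfer_in_derived_SnT:
  fixes a :: "'k::field"
  assumes "i \<in> {1..n}" "j \<in> {1..n}" "i \<noteq> j" "a \<noteq> 0"
  shows "(id, torus_transfer i j a) \<in> derived (SnT n) (carrier (SnT n))"
proof -
  let ?G = "SnT n :: ((nat \<Rightarrow> nat) \<times> (nat \<Rightarrow> 'k)) monoid"
  define l where "l = (\<lambda>m. if m = i then inverse a else (1::'k))"
  define t where "t = Transposition.transpose i j"
  have x: "(id, l) \<in> carrier ?G"
    using assms by (auto simp: SnT_carrier_iff torus_def l_def)
  have y: "(t, \<lambda>_. 1) \<in> carrier ?G"
    using assms by (auto simp: SnT_carrier_iff torus_def t_def intro: permutes_swap_id)
  have inv_t: "inv' t = t"
    by (rule inv_unique_comp) (simp_all add: t_def)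
  have "(id, l) \<otimes>\<^bsub>?G\<^esub> (t, \<lambda>_. 1) \<otimes>\<^bsub>?G\<^esub> inv\<^bsub>?G\<^esub> (id, l) \<otimes>\<^bsub>?G\<^esub> inv\<^bsub>?G\<^esub> (t, \<lambda>_. 1)
      = (id, \<lambda>m. l m * inverse (l (t m)))"
    using x y by (simp add: SnT_inv inv_t t_def)
  also have "\<dots> = (id, torus_transfer i j a)"
    using assms by (auto simp: torus_transfer_def l_def t_def Transposition.transpose_def)
  finally have "(id, torus_transfer i j a) \<in> derived_set ?G (carrier ?G)"
    using x y by blast
  then show ?thesis
    unfolding derived_def by (rule generate.incl)
qed

text \<open>Induction on the number \<open>Suc k\<close> of coordinates that may differ from 1: the last one is
  transferred onto its predecessor.\<close>

lemma torus_prod_one_in_derived_SnT: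
  fixes l :: "nat \<Rightarrow> 'k::field"
  assumes "l \<in> torus n" "\<forall>i>Suc k. l i = 1" "(\<Prod>i\<in>{1..n}. l i) = 1"
  shows "(id, l) \<in> derived (SnT n) (carrier (SnT n))"
  using assms
proof (induction k arbitrary: l)
  case 0
  have "(\<Prod>i\<in>{1..n}. l i) = (\<Prod>i\<in>{1..min n 1}. l i)"
    using "0.prems"(2) by (intro prod.mono_neutral_right) auto
  with "0.prems" have "l 1 = 1"
    by (cases "n = 0") (auto simp: torus_def)
  have "l = (\<lambda>_. 1)"
  proof
    fix i
    show "l i = 1"
      using "0.prems"(1,2) \<open>l 1 = 1\<close> by (cases "i \<le> 1") (auto simp: torus_def le_Suc_eq)
  qed
  moreover have "\<one>\<^bsub>SnT n\<^esub> \<in> derived (SnT n :: ((nat \<Rightarrow> nat) \<times> (nat \<Rightarrow> 'k)) monoid) (carrier (SnT n))"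
    by (rule subgroup.one_closed[OF subgroup_derived_SnT])
  ultimately show ?case by (simp add: id_def)
next
  case (Suc k)
  let ?G = "SnT n :: ((nat \<Rightarrow> nat) \<times> (nat \<Rightarrow> 'k)) monoid"
  show ?case
  proof (cases "Suc (Suc k) \<le> n")
    case False
    then have "\<forall>i>Suc k. l i = 1"
      using Suc.prems(1) by (auto simp: torus_def)
    then show ?thesis using Suc by blast
  next
    case True
    define a where "a = l (Suc (Suc k))"
    define l' where "l' = l(Suc k := l (Suc k) * a, Suc (Suc k) := 1)"
    have a: "a \<noteq> 0" using torus_nonzero[OF Suc.prems(1)] by (simp add: a_def)
    have split: "(id, l) = (id, l') \<otimes>\<^bsub>?G\<^esub> (id, torus_transfer (Suc k) (Suc (Suc k)) a)"
      using a by (auto simp: l'_def torus_transfer_def a_def)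
    have l': "l' \<in> torus n"
      using Suc.prems(1) True a torus_nonzero[OF Suc.prems(1)] by (auto simp: torus_def l'_def)
    have "(\<Prod>i\<in>{1..n}. l' i) = (\<Prod>i\<in>{1..n}. l i)"
    proof -
      have "(\<Prod>i\<in>{1..n}. l i) = (\<Prod>i\<in>{1..n}. l' i) * (\<Prod>i\<in>{1..n}. torus_transfer (Suc k) (Suc (Suc k)) a i)"
        using split by (simp add: prod.distrib)
      also have "(\<Prod>i\<in>{1..n}. torus_transfer (Suc k) (Suc (Suc k)) a i)
          = (\<Prod>i\<in>{Suc k, Suc (Suc k)}. torus_transfer (Suc k) (Suc (Suc k)) a i)"
        using True by (intro prod.mono_neutral_right) (auto simp: torus_transfer_def)
      finally show ?thesis using a by (simp add: torus_transfer_def)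
    qed
    moreover have "\<forall>i>Suc k. l' i = 1"
      using Suc.prems(2) by (simp add: l'_def)
    ultimately have "(id, l') \<in> derived ?G (carrier ?G)"
      using Suc.IH[OF l'] Suc.prems(3) by (simp add: id_def)
    moreover have "(id, torus_transfer (Suc k) (Suc (Suc k)) a) \<in> derived ?G (carrier ?G)"
      using True a by (intro torus_transfer_in_derived_SnT) auto
    ultimately show ?thesis
      unfolding split by (rule subgroup.m_closed[OF subgroup_derived_SnT])
  qed
qed

theorem lemma5p3:
  fixes n :: nat
  assumes "n \<ge> 2"
  shows "derived (SnT n :: ((nat \<Rightarrow> nat) \<times> (nat \<Rightarrow> 'k::field_char_0)) monoid) (carrier (SnT n))
         = {(s, l). s \<in> derived (sym_group n) (carrier (sym_group n)) \<and> l \<in> (torus1 n :: (nat \<Rightarrow> 'k) set)}"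
    (is "?D = ?R")
proof
  let ?G = "SnT n :: ((nat \<Rightarrow> nat) \<times> (nat \<Rightarrow> 'k)) monoid"
  show "?D \<subseteq> ?R"
  proof clarify
    fix s l assume sl: "(s, l) \<in> ?D"
    then have "(s, l) \<in> carrier ?G"
      using subgroup.subset[OF subgroup_derived_SnT] by blast
    with sl fst_image_derived_SnT[where 'k = 'k] torus_prod_derived_SnT[OF sl]
    show "s \<in> derived (sym_group n) (carrier (sym_group n)) \<and> l \<in> torus1 n"
      by (force simp: SnT_carrier_iff torus1_def)
  qed
  show "?R \<subseteq> ?D"
  proof clarify
    fix s and l :: "nat \<Rightarrow> 'k"
    assume "s \<in> derived (sym_group n) (carrier (sym_group n))" "l \<in> torus1 n"
    then have "(s, \<lambda>_. 1) \<in> ?D" "(id, l) \<in> ?D"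
      using embedded_derived_sym_group_in_derived_SnT torus_prod_one_in_derived_SnT[of l n n]
      by (auto simp: torus1_def torus_def)
    then have "(s, \<lambda>_. 1) \<otimes>\<^bsub>?G\<^esub> (id, l) \<in> ?D"
      by (rule subgroup.m_closed[OF subgroup_derived_SnT])
    then show "(s, l) \<in> ?D" by simp
  qed
qed

end
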